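(* For every $k\in\mathbb{Z}^+$, the measure $d\mu(z)=|z_1|^{2k-2}\,dV(z_1,z_2)$ is a Carleson measure of $A^2(\mathbb{H}_k)$ but not a vanishing Carleson measure.
   Context: $\mathbb{H}_k=\{(z_1,z_2)\in\mathbb{C}^2:|z_1|^k<|z_2|<1\}$, $dV$ Lebesgue measure, $A^2(\mathbb{H}_k)$ the holomorphic $dV$-square-integrable functions. A non-negative finite Borel measure $\mu$ is a Carleson measure if the inclusion $A^2(\mathbb{H}_k)\hookrightarrow L^2(\mathbb{H}_k,\mu)$ is bounded, and vanishing if it is compact. *)

theory Defs
  imports "HOL-Analysis.Analysis"
begin

definition Hk :: "nat \<Rightarrow> (complex \<times> complex) set" where
  "Hk k = {z. norm (fst z) ^ k < norm (snd z) \<and> norm (snd z) < 1}"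

definition holo2 :: "(complex \<times> complex \<Rightarrow> complex) \<Rightarrow> (complex \<times> complex) set \<Rightarrow> bool" where
  "holo2 f U \<longleftrightarrow> (\<forall>z\<in>U. \<exists>a b. (f has_derivative (\<lambda>h. a * fst h + b * snd h)) (at z))"

definition L2sq :: "nat \<Rightarrow> (complex \<times> complex) measure \<Rightarrow> (complex \<times> complex \<Rightarrow> complex) \<Rightarrow> ennreal" where
  "L2sq k M f = (\<integral>\<^sup>+ z\<in>Hk k. ennreal (norm (f z) ^ 2) \<partial>M)"

definition bergman :: "nat \<Rightarrow> (complex \<times> complex \<Rightarrow> complex) set" where
  "bergman k = {f. holo2 f (Hk k) \<and> L2sq k lebesgue f < \<infinity>}"

definition carleson :: "nat \<Rightarrow> (complex \<times> complex) measure \<Rightarrow> bool" where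
  "carleson k \<mu> \<longleftrightarrow>
     (\<exists>C::real. \<forall>f\<in>bergman k. L2sq k \<mu> f \<le> ennreal C * L2sq k lebesgue f)"

text \<open>Vanishing Carleson measure: the inclusion is compact, i.e. (bounded and) the image of
  the unit ball of A^2 is relatively compact in the complete space L^2(mu): every sequence in
  the unit ball has a subsequence which is Cauchy in L^2(mu).\<close>
definition vanishing_carleson :: "nat \<Rightarrow> (complex \<times> complex) measure \<Rightarrow> bool" where
  "vanishing_carleson k \<mu> \<longleftrightarrow> carleson k \<mu> \<and>
     (\<forall>f :: nat \<Rightarrow> complex \<times> complex \<Rightarrow> complex.
        (\<forall>n. f n \<in> bergman k \<and> L2sq k lebesgue (f n) \<le> 1) \<longrightarrow>
        (\<exists>r::nat \<Rightarrow> nat. strict_mono r \<and>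
           (\<forall>e::real>0. \<exists>N. \<forall>m\<ge>N. \<forall>n\<ge>N.
              L2sq k \<mu> (\<lambda>z. f (r m) z - f (r n) z) < ennreal e)))"

end

theory Submission
  imports Defs
begin

text \<open>On \<open>H\<^sub>k\<close> we have \<open>|z\<^sub>1| < 1\<close>, so the weight \<open>|z\<^sub>1|\<^bsup>2k-2\<^esup>\<close> is at most 1 and
  \<open>\<mu>\<close> is a Carleson measure with constant 1. It is not vanishing because of the normalized
  monomials \<open>z\<^sub>2\<^sup>m / \<parallel>z\<^sub>2\<^sup>m\<parallel>\<close>: they lie on the unit sphere of \<open>A\<^sup>2\<close> and tend to 0
  pointwise on \<open>H\<^sub>k\<close>, so by Fatou's lemma an \<open>L\<^sup>2(\<mu>)\<close>-Cauchy subsequence would have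
  arbitrarily small \<open>L\<^sup>2(\<mu>)\<close>-norms. But these norms stay bounded below. As \<open>m\<close> grows, the mass of
  \<open>|z\<^sub>2|\<^bsup>2m\<^esup>\<close> concentrates near \<open>|z\<^sub>2| = 1\<close>: the part of \<open>H\<^sub>k\<close> where
  \<open>|z\<^sub>2| \<le> (3/4)\<^sup>k\<close> contributes only \<open>(3/4)\<^bsup>2km\<^esup> vol(H\<^sub>k)\<close>, the rest lies in the disc
  times the annulus \<open>(3/4)\<^sup>k < |z\<^sub>2| < 1\<close>, and \<open>H\<^sub>k\<close> itself contains the product of the disc
  \<open>|z\<^sub>1 - 5/8| < 1/8\<close>, on which the weight is at least \<open>4\<^bsup>1-k\<^esup>\<close>, with that annulus.\<close>

lemma norm_bounds_if_in_ball:
  fixes c :: "'a::real_normed_vector"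
  assumes "x \<in> ball c r"
  shows "norm c - r < norm x" "norm x < norm c + r"
  using assms norm_triangle_ineq2[of c x] norm_triangle_ineq2[of x c]
  by (auto simp: dist_norm norm_minus_commute)

lemma emeasure_lborel_eq_measure_if_bounded:
  "bounded A \<Longrightarrow> emeasure lborel A = ennreal (measure lborel A)"
  using emeasure_bounded_finite[of A] by (intro emeasure_eq_ennreal_measure) simp

lemma borel_measurable_ennreal_times_indicator:
  fixes g :: "'a::topological_space \<Rightarrow> real"
  assumes "continuous_on S g" "S \<in> sets borel"
  shows "(\<lambda>z. ennreal (g z) * indicator S z) \<in> borel_measurable borel"
proof -
  have "(\<lambda>z. indicator S z *\<^sub>R g z) \<in> borel_measurable borel"
    using assms by (intro borel_measurable_continuous_on_indicator)
  then have "(\<lambda>z. ennreal (indicator S z *\<^sub>R g z)) \<in> borel_measurable borel"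
    by measurable
  then show ?thesis
    by (rule measurable_cong[THEN iffD1, rotated]) (simp add: indicator_def)
qed

lemma borel_measurable_if_sets_eq_lebesgue:
  fixes f :: "'a::euclidean_space \<Rightarrow> 'b::topological_space"
  assumes "sets M = sets lebesgue" "f \<in> borel_measurable borel"
  shows "f \<in> borel_measurable M"
  using assms(2) by (simp add: measurable_cong_sets[OF assms(1) refl] measurable_completion)

lemma borel_measurable_norm_power_ennreal [measurable]:
  "(\<lambda>y::'a::real_normed_vector. ennreal (norm y ^ n)) \<in> borel_measurable borel"
  by measurable

lemma nn_integral_Times_snd:
  fixes A :: "'a::euclidean_space set" and B :: "'b::euclidean_space set"
  assumes [measurable]: "g \<in> borel_measurable borel" "A \<in> sets borel" "B \<in> sets borel"
  shows "(\<integral>\<^sup>+z\<in>A \<times> B. g (snd z) \<partial>lborel) = emeasure lborel A * (\<integral>\<^sup>+y\<in>B. g y \<partial>lborel)"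
proof -
  have "(\<integral>\<^sup>+z\<in>A \<times> B. g (snd z) \<partial>lborel)
      = (\<integral>\<^sup>+x. \<integral>\<^sup>+y. g y * indicator (A \<times> B) (x, y) \<partial>lborel \<partial>lborel)"
    by (subst lborel_prod[symmetric], subst lborel.nn_integral_fst[symmetric]) auto
  also have "\<dots> = (\<integral>\<^sup>+x. (\<integral>\<^sup>+y\<in>B. g y \<partial>lborel) * indicator A x \<partial>lborel)"
    by (intro nn_integral_cong, subst nn_integral_multc[symmetric])
      (auto intro!: nn_integral_cong simp: indicator_def)
  also have "\<dots> = emeasure lborel A * (\<integral>\<^sup>+y\<in>B. g y \<partial>lborel)"
    using nn_integral_cmult_indicator[of A lborel "\<integral>\<^sup>+y\<in>B. g y \<partial>lborel"]
    by (simp add: mult.commute)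
  finally show ?thesis .
qed

lemma eventually_power_mult_le_power_mult:
  fixes s t V A :: real
  assumes "0 \<le> s" "s < t" "0 < A"
  shows "eventually (\<lambda>n. s ^ n * V \<le> t ^ n * A) sequentially"
proof -
  have "(\<lambda>n. (s / t) ^ n * V) \<longlonglongrightarrow> 0"
    using assms by (intro tendsto_mult_left_zero LIMSEQ_power_zero) simp
  then have "eventually (\<lambda>n. (s / t) ^ n * V < A) sequentially"
    using assms(3) by (rule order_tendstoD)
  then show ?thesis
  proof (rule eventually_mono)
    fix n assume "(s / t) ^ n * V < A"
    then have "t ^ n * ((s / t) ^ n * V) \<le> t ^ n * A"
      using assms by (intro mult_left_mono) auto
    then show "s ^ n * V \<le> t ^ n * A"
      using assms by (simp add: power_divide)
  qed
qed

lemma power_divide_tendsto_zero: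
  fixes a :: "nat \<Rightarrow> real"
  assumes "0 < c" "0 \<le> x" "x < t" "\<And>n. c * t ^ n \<le> a n"
  shows "(\<lambda>n. x ^ n / a n) \<longlonglongrightarrow> 0"
proof (rule tendsto_sandwich[of "\<lambda>_. 0" _ _ "\<lambda>n. (x / t) ^ n / c"])
  have pos: "0 < c * t ^ n" for n
    using assms by simp
  have a_pos: "0 < a n" for n
    using pos[of n] assms(4)[of n] by linarith
  show "\<forall>\<^sub>F n in sequentially. 0 \<le> x ^ n / a n"
    using assms(2) a_pos by (intro always_eventually allI divide_nonneg_pos) auto
  show "\<forall>\<^sub>F n in sequentially. x ^ n / a n \<le> (x / t) ^ n / c"
  proof (intro always_eventually allI)
    fix n
    have "x ^ n / a n \<le> x ^ n / (c * t ^ n)"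
      using assms(2,4) pos a_pos by (intro divide_left_mono) auto
    then show "x ^ n / a n \<le> (x / t) ^ n / c"
      by (simp add: power_divide mult.commute)
  qed
  show "(\<lambda>n. (x / t) ^ n / c) \<longlonglongrightarrow> 0"
    using assms by (intro tendsto_divide_zero LIMSEQ_power_zero) simp
qed simp

lemma three_quarters_power_bounds:
  assumes "1 \<le> k"
  shows "0 < ((3::real)/4) ^ k" "((3::real)/4) ^ k \<le> 3/4"
  using power_decreasing[OF assms, of "3/4::real"] by simp_all

lemma norm_fst_less_one_if_in_Hk: "z \<in> Hk k \<Longrightarrow> norm (fst z) < 1"
proof (rule ccontr)
  assume "z \<in> Hk k" "\<not> norm (fst z) < 1"
  then have "1 \<le> norm (fst z) ^ k" by (simp add: one_le_power)
  with \<open>z \<in> Hk k\<close> show False by (auto simp: Hk_def)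
qed

lemma Hk_subset_ball_Times_ball: "Hk k \<subseteq> ball 0 1 \<times> ball 0 1"
  using norm_fst_less_one_if_in_Hk by (force simp: Hk_def)

lemma open_Hk: "open (Hk k)"
  unfolding Hk_def by (intro open_Collect_conj open_Collect_less continuous_intros)

lemma Hk_borel [measurable]: "Hk k \<in> sets borel"
  by (simp add: open_Hk)

lemma bounded_Hk: "bounded (Hk k)"
  by (intro bounded_subset[OF _ Hk_subset_ball_Times_ball] bounded_Times bounded_ball)

definition annulus :: "real \<Rightarrow> complex set" where
  "annulus r = {y. r < norm y \<and> norm y < 1}"

lemma open_annulus: "open (annulus r)"
  unfolding annulus_def by (intro open_Collect_conj open_Collect_less continuous_intros)

lemma annulus_borel [measurable]: "annulus r \<in> sets borel"
  by (simp add: open_annulus)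

lemma annulus_subset_ball: "annulus r \<subseteq> ball 0 1"
  by (auto simp: annulus_def)

lemma bounded_annulus: "bounded (annulus r)"
  by (intro bounded_subset[OF _ annulus_subset_ball] bounded_ball)

lemma ball_subset_annulus:
  assumes "0 \<le> t"
  shows "ball (complex_of_real ((1 + t) / 2)) ((1 - t) / 2) \<subseteq> annulus t"
proof
  fix y assume y: "y \<in> ball (complex_of_real ((1 + t) / 2)) ((1 - t) / 2)"
  have c: "norm (complex_of_real ((1 + t) / 2)) = (1 + t) / 2"
    using assms by (simp only: norm_of_real) simp
  have "t < norm y" using norm_bounds_if_in_ball(1)[OF y] unfolding c by argo
  moreover have "norm y < 1" using norm_bounds_if_in_ball(2)[OF y] unfolding c by argo
  ultimately show "y \<in> annulus t" by (simp add: annulus_def)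
qed

lemma measure_annulus_pos:
  assumes "0 \<le> t" "t < 1"
  shows "0 < measure lborel (annulus t)"
proof -
  have "0 < emeasure lborel (ball (complex_of_real ((1 + t) / 2)) ((1 - t) / 2))"
    using assms by (simp add: emeasure_ball)
  also have "\<dots> \<le> emeasure lborel (annulus t)"
    using ball_subset_annulus[OF assms(1)] by (intro emeasure_mono) auto
  also have "\<dots> = ennreal (measure lborel (annulus t))"
    by (intro emeasure_lborel_eq_measure_if_bounded bounded_annulus)
  finally show ?thesis by simp
qed

lemma ball_Times_annulus_subset_Hk:
  assumes "1 \<le> k"
  shows "ball (5/8) (1/8) \<times> annulus ((3/4) ^ k) \<subseteq> Hk k"
proof
  fix z :: "complex \<times> complex"
  assume z: "z \<in> ball (5/8) (1/8) \<times> annulus ((3/4) ^ k)"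
  then have "norm (fst z) < 3/4"
    using norm_bounds_if_in_ball(2)[of "fst z" "5/8" "1/8"] by auto
  then have "norm (fst z) ^ k < (3/4) ^ k"
    using assms by (intro power_strict_mono) auto
  with z show "z \<in> Hk k" by (auto simp: Hk_def annulus_def)
qed

lemma L2sq_lebesgue: "L2sq k lebesgue f = (\<integral>\<^sup>+z\<in>Hk k. ennreal (norm (f z) ^ 2) \<partial>lborel)"
  unfolding L2sq_def by (rule nn_integral_completion)

lemma L2sq_cmult:
  assumes [measurable]: "f \<in> borel_measurable M" "Hk k \<in> sets M"
  shows "L2sq k M (\<lambda>z. c * f z) = ennreal (norm c ^ 2) * L2sq k M f"
proof -
  have "L2sq k M (\<lambda>z. c * f z)
      = (\<integral>\<^sup>+z. ennreal (norm c ^ 2) * (ennreal (norm (f z) ^ 2) * indicator (Hk k) z) \<partial>M)"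
    unfolding L2sq_def
    by (intro nn_integral_cong) (simp add: norm_mult power_mult_distrib ennreal_mult mult.assoc)
  also have "\<dots> = ennreal (norm c ^ 2) * L2sq k M f"
    unfolding L2sq_def by (intro nn_integral_cmult) measurable
  finally show ?thesis .
qed

definition weighted_measure :: "nat \<Rightarrow> (complex \<times> complex) measure" where
  "weighted_measure k =
     density lebesgue (\<lambda>z. indicator (Hk k) z * ennreal (norm (fst z) ^ (2 * k - 2)))"

lemma sets_weighted_measure [simp, measurable_cong]: "sets (weighted_measure k) = sets lebesgue"
  by (simp add: weighted_measure_def)

lemma L2sq_weighted_measure:
  assumes "continuous_on (Hk k) f"
  shows "L2sq k (weighted_measure k) f
       = (\<integral>\<^sup>+z\<in>Hk k. ennreal (norm (fst z) ^ (2 * k - 2) * norm (f z) ^ 2) \<partial>lborel)"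
proof -
  have [measurable]: "(\<lambda>z. norm (fst z) ^ (2 * k - 2)) \<in> borel_measurable borel"
    by (intro borel_measurable_continuous_onI continuous_intros)
  have weight: "(\<lambda>z. indicator (Hk k) z * ennreal (norm (fst z) ^ (2 * k - 2))) \<in> borel_measurable borel"
    by measurable
  have integrand: "(\<lambda>z. ennreal (norm (f z) ^ 2) * indicator (Hk k) z) \<in> borel_measurable borel"
    using assms by (intro borel_measurable_ennreal_times_indicator continuous_intros) auto
  have "L2sq k (weighted_measure k) f = (\<integral>\<^sup>+z. indicator (Hk k) z * ennreal (norm (fst z) ^ (2 * k - 2))
      * (ennreal (norm (f z) ^ 2) * indicator (Hk k) z) \<partial>lebesgue)"
    unfolding L2sq_def weighted_measure_def
    by (intro nn_integral_density measurable_completion) (simp_all add: weight integrand)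
  also have "\<dots> = (\<integral>\<^sup>+z\<in>Hk k. ennreal (norm (fst z) ^ (2 * k - 2) * norm (f z) ^ 2) \<partial>lborel)"
    unfolding nn_integral_completion
    by (intro nn_integral_cong) (auto simp: indicator_def ennreal_mult)
  finally show ?thesis .
qed

lemma L2sq_weighted_measure_le:
  assumes "continuous_on (Hk k) f"
  shows "L2sq k (weighted_measure k) f \<le> L2sq k lebesgue f"
  unfolding L2sq_weighted_measure[OF assms] L2sq_lebesgue
proof (intro nn_integral_mono)
  fix z :: "complex \<times> complex"
  show "ennreal (norm (fst z) ^ (2 * k - 2) * norm (f z) ^ 2) * indicator (Hk k) z
      \<le> ennreal (norm (f z) ^ 2) * indicator (Hk k) z"
  proof (cases "z \<in> Hk k")
    case True
    then have "norm (fst z) ^ (2 * k - 2) \<le> 1"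
      using norm_fst_less_one_if_in_Hk by (intro power_le_one) (auto simp: less_imp_le)
    then have "norm (fst z) ^ (2 * k - 2) * norm (f z) ^ 2 \<le> norm (f z) ^ 2"
      by (simp add: mult_left_le_one_le)
    with True show ?thesis by (simp add: ennreal_leI)
  qed simp
qed

lemma holo2_imp_continuous_on: "holo2 f U \<Longrightarrow> continuous_on U f"
  unfolding holo2_def
  by (intro continuous_at_imp_continuous_on) (metis has_derivative_continuous)

lemma carleson_weighted_measure: "carleson k (weighted_measure k)"
  unfolding carleson_def
  using L2sq_weighted_measure_le holo2_imp_continuous_on
  by (intro exI[of _ 1]) (simp add: bergman_def)

definition annulus_moment :: "real \<Rightarrow> nat \<Rightarrow> ennreal" where
  "annulus_moment r m = (\<integral>\<^sup>+y\<in>annulus r. ennreal (norm y ^ (2 * m)) \<partial>lborel)"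

lemma annulus_moment_lower:
  assumes "0 \<le> t" "s \<le> t"
  shows "ennreal (t ^ (2 * m) * measure lborel (annulus t)) \<le> annulus_moment s m"
proof -
  have "ennreal (t ^ (2 * m) * measure lborel (annulus t))
      = (\<integral>\<^sup>+y. ennreal (t ^ (2 * m)) * indicator (annulus t) y \<partial>lborel)"
    using assms(1)
    by (simp add: nn_integral_cmult_indicator emeasure_lborel_eq_measure_if_bounded bounded_annulus
        ennreal_mult)
  also have "\<dots> \<le> annulus_moment s m"
    unfolding annulus_moment_def
  proof (intro nn_integral_mono)
    fix y :: complex
    show "ennreal (t ^ (2 * m)) * indicator (annulus t) y
        \<le> ennreal (norm y ^ (2 * m)) * indicator (annulus s) y"
      using assms by (auto simp: indicator_def annulus_def intro!: ennreal_leI power_mono)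
  qed
  finally show ?thesis .
qed

lemma L2sq_lebesgue_snd_power:
  "L2sq k lebesgue (\<lambda>z. snd z ^ m) = (\<integral>\<^sup>+z\<in>Hk k. ennreal (norm (snd z) ^ (2 * m)) \<partial>lborel)"
  by (simp add: L2sq_lebesgue norm_power power_mult[symmetric] mult.commute)

lemma L2sq_weighted_measure_snd_power:
  "L2sq k (weighted_measure k) (\<lambda>z. snd z ^ m)
     = (\<integral>\<^sup>+z\<in>Hk k. ennreal (norm (fst z) ^ (2 * k - 2) * norm (snd z) ^ (2 * m)) \<partial>lborel)"
  by (simp add: L2sq_weighted_measure continuous_intros norm_power power_mult[symmetric] mult.commute)

lemma L2sq_lebesgue_snd_power_upper:
  assumes "0 \<le> s"
  shows "L2sq k lebesgue (\<lambda>z. snd z ^ m)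
       \<le> ennreal (s ^ (2 * m) * measure lborel (Hk k))
         + ennreal (measure lborel (ball (0::complex) 1)) * annulus_moment s m"
proof -
  have "L2sq k lebesgue (\<lambda>z. snd z ^ m)
      \<le> (\<integral>\<^sup>+z. ennreal (s ^ (2 * m)) * indicator (Hk k) z
           + ennreal (norm (snd z) ^ (2 * m)) * indicator (ball 0 1 \<times> annulus s) z \<partial>lborel)"
    unfolding L2sq_lebesgue_snd_power
  proof (intro nn_integral_mono)
    fix z :: "complex \<times> complex"
    show "ennreal (norm (snd z) ^ (2 * m)) * indicator (Hk k) z
        \<le> ennreal (s ^ (2 * m)) * indicator (Hk k) z
          + ennreal (norm (snd z) ^ (2 * m)) * indicator (ball 0 1 \<times> annulus s) z"
    proof (cases "z \<in> Hk k \<and> norm (snd z) \<le> s")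
      case True
      then show ?thesis by (auto intro!: add_increasing2 ennreal_leI power_mono)
    next
      case False
      then show ?thesis
        using norm_fst_less_one_if_in_Hk[of z k]
        by (auto simp: indicator_def annulus_def Hk_def mem_Times_iff)
    qed
  qed
  also have "\<dots> = (\<integral>\<^sup>+z. ennreal (s ^ (2 * m)) * indicator (Hk k) z \<partial>lborel)
      + (\<integral>\<^sup>+z\<in>ball (0::complex) 1 \<times> annulus s. ennreal (norm (snd z) ^ (2 * m)) \<partial>lborel)"
  proof (rule nn_integral_add)
    show "(\<lambda>z. ennreal (norm (snd z) ^ (2 * m)) * indicator (ball (0::complex) 1 \<times> annulus s) z)
        \<in> borel_measurable lborel"
      unfolding measurable_lborel2
      by (intro borel_measurable_ennreal_times_indicator continuous_intros borel_open open_Times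
          open_ball open_annulus)
  qed simp
  also have "\<dots> = ennreal (s ^ (2 * m) * measure lborel (Hk k))
      + ennreal (measure lborel (ball (0::complex) 1)) * annulus_moment s m"
    using assms
      nn_integral_Times_snd[OF borel_measurable_norm_power_ennreal, of "ball (0::complex) 1" "annulus s"]
    by (simp add: nn_integral_cmult_indicator annulus_moment_def ennreal_mult
        emeasure_lborel_eq_measure_if_bounded bounded_Hk)
  finally show ?thesis .
qed

lemma L2sq_weighted_measure_snd_power_lower:
  assumes "1 \<le> k"
  shows "ennreal ((1/2) ^ (2 * k - 2) * measure lborel (ball (5/8::complex) (1/8)))
           * annulus_moment ((3/4) ^ k) m
         \<le> L2sq k (weighted_measure k) (\<lambda>z. snd z ^ m)"
proof -
  define c :: real where "c = (1/2) ^ (2 * k - 2)"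
  define B :: "complex set" where "B = ball (5/8) (1/8)"
  define A where "A = annulus ((3/4) ^ k)"
  have [measurable]: "B \<in> sets borel" "A \<in> sets borel"
    by (simp_all add: B_def A_def)
  have "(\<integral>\<^sup>+y\<in>A. ennreal (c * norm y ^ (2 * m)) \<partial>lborel)
      = (\<integral>\<^sup>+y. ennreal c * (ennreal (norm y ^ (2 * m)) * indicator A y) \<partial>lborel)"
    by (intro nn_integral_cong) (simp add: c_def ennreal_mult mult.assoc)
  also have "\<dots> = ennreal c * annulus_moment ((3/4) ^ k) m"
    unfolding annulus_moment_def A_def by (rule nn_integral_cmult) measurable
  finally have "ennreal (c * measure lborel B) * annulus_moment ((3/4) ^ k) m
      = emeasure lborel B * (\<integral>\<^sup>+y\<in>A. ennreal (c * norm y ^ (2 * m)) \<partial>lborel)"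
    by (simp add: c_def B_def ennreal_mult emeasure_lborel_eq_measure_if_bounded ac_simps)
  also have "\<dots> = (\<integral>\<^sup>+z\<in>B \<times> A. ennreal (c * norm (snd z) ^ (2 * m)) \<partial>lborel)"
    by (rule nn_integral_Times_snd[symmetric]) auto
  also have "\<dots> \<le> L2sq k (weighted_measure k) (\<lambda>z. snd z ^ m)"
    unfolding L2sq_weighted_measure_snd_power
  proof (intro nn_integral_mono)
    fix z :: "complex \<times> complex"
    show "ennreal (c * norm (snd z) ^ (2 * m)) * indicator (B \<times> A) z
        \<le> ennreal (norm (fst z) ^ (2 * k - 2) * norm (snd z) ^ (2 * m)) * indicator (Hk k) z"
    proof (cases "z \<in> B \<times> A")
      case True
      then have "z \<in> Hk k"
        using ball_Times_annulus_subset_Hk[OF assms] by (auto simp: A_def B_def)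
      moreover have "1/2 \<le> norm (fst z)"
        using True norm_bounds_if_in_ball(1)[of "fst z" "5/8" "1/8"] by (auto simp: B_def)
      then have "c \<le> norm (fst z) ^ (2 * k - 2)"
        unfolding c_def by (intro power_mono) auto
      ultimately show ?thesis
        using True by (auto intro!: ennreal_leI mult_right_mono)
    qed simp
  qed
  finally show ?thesis by (simp add: c_def B_def)
qed

lemma L2sq_lebesgue_snd_power_eventually_le:
  assumes "1 \<le> k"
  shows "eventually (\<lambda>m. L2sq k lebesgue (\<lambda>z. snd z ^ m)
      \<le> ennreal (1 + measure lborel (ball (0::complex) 1)) * annulus_moment ((3/4) ^ k) m) sequentially"
proof -
  define s :: real where "s = (3/4) ^ k"
  define t where "t = (1 + s) / 2"
  define d where "d = measure lborel (ball (0::complex) 1)"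
  have st: "0 < s" "s < t" "t < 1"
    using three_quarters_power_bounds[OF assms] by (auto simp: s_def t_def)
  have "eventually (\<lambda>m. (s\<^sup>2) ^ m * measure lborel (Hk k) \<le> (t\<^sup>2) ^ m * measure lborel (annulus t))
      sequentially"
    using st measure_annulus_pos[of t]
    by (intro eventually_power_mult_le_power_mult power_strict_mono) auto
  then show ?thesis
    unfolding s_def[symmetric] d_def[symmetric]
  proof (rule eventually_mono)
    fix m
    assume "(s\<^sup>2) ^ m * measure lborel (Hk k) \<le> (t\<^sup>2) ^ m * measure lborel (annulus t)"
    then have "ennreal (s ^ (2 * m) * measure lborel (Hk k))
        \<le> ennreal (t ^ (2 * m) * measure lborel (annulus t))"
      by (simp add: power_mult ennreal_leI)
    also have "\<dots> \<le> annulus_moment s m"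
      using st by (intro annulus_moment_lower) auto
    finally have "ennreal (s ^ (2 * m) * measure lborel (Hk k)) \<le> annulus_moment s m" .
    then have "L2sq k lebesgue (\<lambda>z. snd z ^ m) \<le> annulus_moment s m + ennreal d * annulus_moment s m"
      using L2sq_lebesgue_snd_power_upper[of s k m] st unfolding d_def
      by (auto intro: order_trans add_right_mono)
    also have "\<dots> = ennreal (1 + d) * annulus_moment s m"
      by (simp add: d_def ennreal_plus distrib_right)
    finally show "L2sq k lebesgue (\<lambda>z. snd z ^ m) \<le> ennreal (1 + d) * annulus_moment s m" .
  qed
qed

lemma L2sq_snd_power_comparable:
  assumes "1 \<le> k"
  obtains c where "0 < c"
    "eventually (\<lambda>m. ennreal c * L2sq k lebesgue (\<lambda>z. snd z ^ m)
                      \<le> L2sq k (weighted_measure k) (\<lambda>z. snd z ^ m)) sequentially"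
proof
  define \<beta> where "\<beta> = (1/2) ^ (2 * k - 2) * measure lborel (ball (5/8::complex) (1/8))"
  define d where "d = measure lborel (ball (0::complex) 1)"
  have "0 \<le> d"
    by (simp add: d_def)
  show "0 < \<beta> / (1 + d)"
    using \<open>0 \<le> d\<close> by (simp add: \<beta>_def content_ball_pos)
  show "eventually (\<lambda>m. ennreal (\<beta> / (1 + d)) * L2sq k lebesgue (\<lambda>z. snd z ^ m)
      \<le> L2sq k (weighted_measure k) (\<lambda>z. snd z ^ m)) sequentially"
    using L2sq_lebesgue_snd_power_eventually_le[OF assms] unfolding d_def[symmetric]
  proof (rule eventually_mono)
    fix m
    assume "L2sq k lebesgue (\<lambda>z. snd z ^ m) \<le> ennreal (1 + d) * annulus_moment ((3/4) ^ k) m"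
    then have "ennreal (\<beta> / (1 + d)) * L2sq k lebesgue (\<lambda>z. snd z ^ m)
        \<le> ennreal (\<beta> / (1 + d)) * (ennreal (1 + d) * annulus_moment ((3/4) ^ k) m)"
      by (rule mult_left_mono) simp
    also have "\<dots> = ennreal \<beta> * annulus_moment ((3/4) ^ k) m"
      using \<open>0 \<le> d\<close> \<open>0 < \<beta> / (1 + d)\<close>
      by (subst mult.assoc[symmetric], subst ennreal_mult[symmetric]) auto
    also have "\<dots> \<le> L2sq k (weighted_measure k) (\<lambda>z. snd z ^ m)"
      unfolding \<beta>_def by (rule L2sq_weighted_measure_snd_power_lower[OF assms])
    finally show "ennreal (\<beta> / (1 + d)) * L2sq k lebesgue (\<lambda>z. snd z ^ m)
        \<le> L2sq k (weighted_measure k) (\<lambda>z. snd z ^ m)" .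
  qed
qed

lemma L2sq_lebesgue_snd_power_geometric_lower:
  assumes "1 \<le> k" "(3/4) ^ k \<le> t" "t < 1"
  obtains c where "0 < c" "\<And>m. ennreal (c * t ^ (2 * m)) \<le> L2sq k lebesgue (\<lambda>z. snd z ^ m)"
proof
  define \<beta> where "\<beta> = (1/2) ^ (2 * k - 2) * measure lborel (ball (5/8::complex) (1/8))"
  have "0 \<le> t"
    using assms three_quarters_power_bounds[OF assms(1)] by linarith
  then show "0 < \<beta> * measure lborel (annulus t)"
    using assms measure_annulus_pos by (simp add: \<beta>_def content_ball_pos)
  fix m
  have "ennreal (\<beta> * measure lborel (annulus t) * t ^ (2 * m))
      = ennreal \<beta> * ennreal (t ^ (2 * m) * measure lborel (annulus t))"
    using \<open>0 \<le> t\<close> by (simp add: \<beta>_def ennreal_mult[symmetric] ac_simps)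
  also have "\<dots> \<le> ennreal \<beta> * annulus_moment ((3/4) ^ k) m"
    using \<open>0 \<le> t\<close> assms(2) by (intro mult_left_mono annulus_moment_lower) auto
  also have "\<dots> \<le> L2sq k (weighted_measure k) (\<lambda>z. snd z ^ m)"
    unfolding \<beta>_def by (rule L2sq_weighted_measure_snd_power_lower[OF assms(1)])
  also have "\<dots> \<le> L2sq k lebesgue (\<lambda>z. snd z ^ m)"
    by (intro L2sq_weighted_measure_le continuous_intros)
  finally show "ennreal (\<beta> * measure lborel (annulus t) * t ^ (2 * m))
      \<le> L2sq k lebesgue (\<lambda>z. snd z ^ m)" .
qed

lemma L2sq_lebesgue_snd_power_finite: "L2sq k lebesgue (\<lambda>z. snd z ^ m) < top"
proof -
  have "L2sq k lebesgue (\<lambda>z. snd z ^ m) \<le> (\<integral>\<^sup>+z. indicator (Hk k) z \<partial>lborel)"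
    unfolding L2sq_lebesgue_snd_power
    by (intro nn_integral_mono) (auto simp: indicator_def Hk_def intro!: power_le_one)
  also have "\<dots> < top"
    using emeasure_bounded_finite[OF bounded_Hk] by simp
  finally show ?thesis .
qed


lemma enn2real_L2sq_lebesgue_snd_power_pos:
  assumes "1 \<le> k"
  shows "0 < enn2real (L2sq k lebesgue (\<lambda>z. snd z ^ m))"
proof -
  have s: "0 < ((3::real)/4) ^ k" "((3::real)/4) ^ k < 1"
    using three_quarters_power_bounds[OF assms] by auto
  obtain c where c: "0 < c"
    "\<And>m. ennreal (c * ((3/4) ^ k) ^ (2 * m)) \<le> L2sq k lebesgue (\<lambda>z. snd z ^ m)"
    using L2sq_lebesgue_snd_power_geometric_lower[OF assms order_refl s(2)] by blast
  have "0 < ennreal (c * ((3/4) ^ k) ^ (2 * m))"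
    using c(1) s(1) by simp
  then have "0 < L2sq k lebesgue (\<lambda>z. snd z ^ m)"
    using c(2) by (rule order_less_le_trans)
  then show ?thesis
    using L2sq_lebesgue_snd_power_finite by (simp add: enn2real_positive_iff)
qed

lemma L2sq_lebesgue_snd_power_eq_ennreal:
  "L2sq k lebesgue (\<lambda>z. snd z ^ m) = ennreal (enn2real (L2sq k lebesgue (\<lambda>z. snd z ^ m)))"
  using L2sq_lebesgue_snd_power_finite by (simp add: less_top[symmetric])

lemma holo2_cmult_snd_power: "holo2 (\<lambda>z. c * snd z ^ m) U"
  unfolding holo2_def
proof
  fix z :: "complex \<times> complex"
  have "((\<lambda>z. c * snd z ^ m) has_derivative (\<lambda>h. c * (of_nat m * snd h * snd z ^ (m - 1)))) (at z)"
    by (intro derivative_intros)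
  then have "((\<lambda>z. c * snd z ^ m) has_derivative
      (\<lambda>h. 0 * fst h + (c * of_nat m * snd z ^ (m - 1)) * snd h)) (at z)"
    by (rule has_derivative_eq_rhs) (auto simp: algebra_simps)
  then show "\<exists>a b. ((\<lambda>z. c * snd z ^ m) has_derivative (\<lambda>h. a * fst h + b * snd h)) (at z)"
    by blast
qed

text \<open>The normalizing factor would be junk (\<open>1 / sqrt 0 = 0\<close>) if the norm of \<open>z\<^sub>2\<^sup>m\<close> were
  0 or infinite; \<open>enn2real_L2sq_lebesgue_snd_power_pos\<close> rules this out.\<close>

definition normalized_monomial :: "nat \<Rightarrow> nat \<Rightarrow> complex \<times> complex \<Rightarrow> complex" where
  "normalized_monomial k m z =
     complex_of_real (1 / sqrt (enn2real (L2sq k lebesgue (\<lambda>z. snd z ^ m)))) * snd z ^ m"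

lemma borel_measurable_normalized_monomial [measurable]:
  "normalized_monomial k m \<in> borel_measurable borel"
  unfolding normalized_monomial_def
  by (intro borel_measurable_continuous_onI continuous_intros)

lemma L2sq_normalized_monomial:
  assumes "sets M = sets lebesgue"
  shows "L2sq k M (normalized_monomial k m)
       = ennreal (1 / enn2real (L2sq k lebesgue (\<lambda>z. snd z ^ m))) * L2sq k M (\<lambda>z. snd z ^ m)"
proof -
  have "(\<lambda>z::complex \<times> complex. snd z ^ m) \<in> borel_measurable M" "Hk k \<in> sets M"
    using assms by (auto intro!: borel_measurable_if_sets_eq_lebesgue borel_measurable_continuous_onI
        continuous_intros)
  then show ?thesis
    unfolding normalized_monomial_def
    by (simp add: L2sq_cmult power_divide del: of_real_divide)
qed

lemma L2sq_lebesgue_normalized_monomial: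
  assumes "1 \<le> k"
  shows "L2sq k lebesgue (normalized_monomial k m) = 1"
proof -
  define a where "a = enn2real (L2sq k lebesgue (\<lambda>z. snd z ^ m))"
  have "0 < a"
    unfolding a_def by (rule enn2real_L2sq_lebesgue_snd_power_pos[OF assms])
  have "L2sq k lebesgue (normalized_monomial k m) = ennreal (1 / a) * L2sq k lebesgue (\<lambda>z. snd z ^ m)"
    unfolding a_def by (rule L2sq_normalized_monomial) simp
  also have "\<dots> = ennreal (1 / a) * ennreal a"
    unfolding a_def by (subst L2sq_lebesgue_snd_power_eq_ennreal) (rule refl)
  also have "\<dots> = 1"
    using \<open>0 < a\<close> by (simp add: ennreal_mult[symmetric])
  finally show ?thesis .
qed

lemma normalized_monomial_in_bergman:
  assumes "1 \<le> k"
  shows "normalized_monomial k m \<in> bergman k"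
proof -
  have "holo2 (normalized_monomial k m) (Hk k)"
    unfolding normalized_monomial_def[abs_def] by (rule holo2_cmult_snd_power)
  then show ?thesis
    using L2sq_lebesgue_normalized_monomial[OF assms] by (simp add: bergman_def)
qed

lemma L2sq_weighted_measure_normalized_monomial_lower:
  assumes "1 \<le> k"
  obtains c N where "0 < c"
    "\<And>m. N \<le> m \<Longrightarrow> ennreal c \<le> L2sq k (weighted_measure k) (normalized_monomial k m)"
proof -
  obtain c where c: "0 < c"
    "eventually (\<lambda>m. ennreal c * L2sq k lebesgue (\<lambda>z. snd z ^ m)
                      \<le> L2sq k (weighted_measure k) (\<lambda>z. snd z ^ m)) sequentially"
    using L2sq_snd_power_comparable[OF assms] by blast
  then obtain N where N: "\<And>m. N \<le> m \<Longrightarrow>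
      ennreal c * L2sq k lebesgue (\<lambda>z. snd z ^ m) \<le> L2sq k (weighted_measure k) (\<lambda>z. snd z ^ m)"
    unfolding eventually_sequentially by blast
  have "ennreal c \<le> L2sq k (weighted_measure k) (normalized_monomial k m)" if "N \<le> m" for m
  proof -
    define a where "a = enn2real (L2sq k lebesgue (\<lambda>z. snd z ^ m))"
    have "0 < a"
      unfolding a_def by (rule enn2real_L2sq_lebesgue_snd_power_pos[OF assms])
    have "ennreal c = ennreal (1 / a) * (ennreal c * ennreal a)"
      using \<open>0 < a\<close> \<open>0 < c\<close> by (simp add: ennreal_mult[symmetric])
    also have "\<dots> \<le> ennreal (1 / a) * L2sq k (weighted_measure k) (\<lambda>z. snd z ^ m)"
      using N[OF that] unfolding a_def
      by (subst (asm) L2sq_lebesgue_snd_power_eq_ennreal) (rule mult_left_mono, auto)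
    also have "\<dots> = L2sq k (weighted_measure k) (normalized_monomial k m)"
      unfolding a_def by (rule L2sq_normalized_monomial[symmetric]) simp
    finally show ?thesis .
  qed
  with c(1) show ?thesis
    by (rule that)
qed

lemma norm_normalized_monomial:
  "norm (normalized_monomial k m z)
     = norm (snd z) ^ m / sqrt (enn2real (L2sq k lebesgue (\<lambda>z. snd z ^ m)))"
  by (simp add: normalized_monomial_def norm_divide norm_power)

lemma normalized_monomial_tendsto_zero:
  assumes "1 \<le> k" "z \<in> Hk k"
  shows "(\<lambda>m. normalized_monomial k m z) \<longlonglongrightarrow> 0"
proof -
  define x where "x = norm (snd z)"
  define t where "t = max ((3/4) ^ k) ((1 + x) / 2)"
  have x: "0 \<le> x" "x < 1"
    using assms(2) by (auto simp: x_def Hk_def)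
  have t: "(3/4) ^ k \<le> t" "x < t" "t < 1"
    using x three_quarters_power_bounds[OF assms(1)] by (auto simp: t_def less_max_iff_disj)
  obtain c where c: "0 < c" "\<And>m. ennreal (c * t ^ (2 * m)) \<le> L2sq k lebesgue (\<lambda>z. snd z ^ m)"
    using L2sq_lebesgue_snd_power_geometric_lower[OF assms(1) t(1,3)] by blast
  have "0 \<le> t"
    using t x by linarith
  have lower: "sqrt c * t ^ m \<le> sqrt (enn2real (L2sq k lebesgue (\<lambda>z. snd z ^ m)))" for m
  proof -
    have "c * t ^ (2 * m) \<le> enn2real (L2sq k lebesgue (\<lambda>z. snd z ^ m))"
      using enn2real_mono[OF c(2)[of m] L2sq_lebesgue_snd_power_finite] c(1) \<open>0 \<le> t\<close> by simp
    moreover have "sqrt (c * t ^ (2 * m)) = sqrt c * t ^ m"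
      using \<open>0 \<le> t\<close> by (simp add: real_sqrt_mult power_mult real_sqrt_power)
    ultimately show ?thesis
      by (metis real_sqrt_le_mono)
  qed
  have "(\<lambda>m. x ^ m / sqrt (enn2real (L2sq k lebesgue (\<lambda>z. snd z ^ m)))) \<longlonglongrightarrow> 0"
    using real_sqrt_gt_zero[OF c(1)] x(1) t(2) lower by (rule power_divide_tendsto_zero)
  then have "(\<lambda>m. norm (normalized_monomial k m z)) \<longlonglongrightarrow> 0"
    by (simp only: norm_normalized_monomial x_def)
  then show ?thesis
    by (rule tendsto_norm_zero_cancel)
qed

text \<open>Fatou's lemma for \<open>g - f n \<rightarrow> g\<close> pointwise on \<open>H\<^sub>k\<close>.\<close>

lemma L2sq_le_if_tendsto_zero:
  assumes [measurable]: "\<And>n. f n \<in> borel_measurable M" "g \<in> borel_measurable M" "Hk k \<in> sets M"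
    and lim: "\<And>z. z \<in> Hk k \<Longrightarrow> (\<lambda>n. f n z) \<longlonglongrightarrow> 0"
    and small: "eventually (\<lambda>n. L2sq k M (\<lambda>z. g z - f n z) \<le> e) sequentially"
  shows "L2sq k M g \<le> e"
proof -
  define G where "G n = (\<lambda>z. ennreal (norm (g z - f n z) ^ 2) * indicator (Hk k) z)" for n
  have "(\<lambda>n. G n z) \<longlonglongrightarrow> ennreal (norm (g z) ^ 2) * indicator (Hk k) z" for z
  proof (cases "z \<in> Hk k")
    case True
    then have "(\<lambda>n. ennreal (norm (g z - f n z) ^ 2)) \<longlonglongrightarrow> ennreal (norm (g z - 0) ^ 2)"
      by (intro tendsto_intros lim)
    with True show ?thesis by (simp add: G_def)
  qed (simp add: G_def)
  then have "L2sq k M g = (\<integral>\<^sup>+z. liminf (\<lambda>n. G n z) \<partial>M)"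
    unfolding L2sq_def by (intro nn_integral_cong lim_imp_Liminf[symmetric]) simp_all
  also have "\<dots> \<le> liminf (\<lambda>n. integral\<^sup>N M (G n))"
    by (rule nn_integral_liminf) (simp add: G_def)
  also have "\<dots> \<le> liminf (\<lambda>n. e)"
    using small by (intro Liminf_mono) (simp add: G_def L2sq_def)
  also have "\<dots> = e"
    by (simp add: Liminf_const)
  finally show ?thesis .
qed

lemma not_vanishing_carleson_if_pointwise_null:
  assumes bergman: "\<And>n. f n \<in> bergman k \<and> L2sq k lebesgue (f n) \<le> 1"
    and meas: "\<And>n. f n \<in> borel_measurable M" "Hk k \<in> sets M"
    and lim: "\<And>z. z \<in> Hk k \<Longrightarrow> (\<lambda>n. f n z) \<longlonglongrightarrow> 0"
    and lower: "0 < c" "\<And>n. ennreal c \<le> L2sq k M (f n)"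
  shows "\<not> vanishing_carleson k M"
proof
  assume "vanishing_carleson k M"
  then have "(\<forall>n. f n \<in> bergman k \<and> L2sq k lebesgue (f n) \<le> 1) \<longrightarrow>
      (\<exists>r::nat \<Rightarrow> nat. strict_mono r \<and>
         (\<forall>e::real>0. \<exists>N. \<forall>m\<ge>N. \<forall>n\<ge>N. L2sq k M (\<lambda>z. f (r m) z - f (r n) z) < ennreal e))"
    unfolding vanishing_carleson_def by (rule conjunct2[THEN spec])
  with bergman obtain r :: "nat \<Rightarrow> nat" where r: "strict_mono r"
    and cauchy: "\<forall>e::real>0. \<exists>N. \<forall>m\<ge>N. \<forall>n\<ge>N. L2sq k M (\<lambda>z. f (r m) z - f (r n) z) < ennreal e"
    by blast
  from cauchy lower(1) obtain N
    where N: "\<forall>m\<ge>N. \<forall>n\<ge>N. L2sq k M (\<lambda>z. f (r m) z - f (r n) z) < ennreal (c / 2)"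
    by (meson half_gt_zero)
  have "L2sq k M (f (r N)) \<le> ennreal (c / 2)"
  proof (rule L2sq_le_if_tendsto_zero[where f = "\<lambda>n. f (r n)"])
    show "\<And>n. f (r n) \<in> borel_measurable M" "f (r N) \<in> borel_measurable M" "Hk k \<in> sets M"
      using meas by auto
    show "(\<lambda>n. f (r n) z) \<longlonglongrightarrow> 0" if "z \<in> Hk k" for z
      using LIMSEQ_subseq_LIMSEQ[OF lim[OF that] r] by (simp add: comp_def)
    show "eventually (\<lambda>n. L2sq k M (\<lambda>z. f (r N) z - f (r n) z) \<le> ennreal (c / 2)) sequentially"
      unfolding eventually_sequentially using N by (blast intro: less_imp_le)
  qed
  also have "\<dots> < ennreal c"
    using lower(1) by (intro ennreal_lessI) auto
  finally show False
    using lower(2)[of "r N"] by (simp add: not_le[symmetric])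
qed

theorem mainTheorem11:
  fixes k :: nat
  assumes "k \<ge> 1"
  defines "\<mu> \<equiv> density lebesgue (\<lambda>z. indicator (Hk k) z * ennreal (norm (fst z) ^ (2 * k - 2)))"
  shows "carleson k \<mu> \<and> \<not> vanishing_carleson k \<mu>"
proof
  have \<mu>: "\<mu> = weighted_measure k"
    by (simp add: \<mu>_def weighted_measure_def)
  show "carleson k \<mu>"
    unfolding \<mu> by (rule carleson_weighted_measure)
  obtain c N where c: "0 < c"
    "\<And>m. N \<le> m \<Longrightarrow> ennreal c \<le> L2sq k (weighted_measure k) (normalized_monomial k m)"
    using L2sq_weighted_measure_normalized_monomial_lower[OF assms(1)] by blast
  show "\<not> vanishing_carleson k \<mu>"
    unfolding \<mu>
  proof (rule not_vanishing_carleson_if_pointwise_null[where f = "\<lambda>n. normalized_monomial k (n + N)"])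
    show "normalized_monomial k (n + N) \<in> bergman k
        \<and> L2sq k lebesgue (normalized_monomial k (n + N)) \<le> 1" for n
      using assms(1) by (simp add: normalized_monomial_in_bergman L2sq_lebesgue_normalized_monomial)
    show "normalized_monomial k (n + N) \<in> borel_measurable (weighted_measure k)" for n
      by (rule borel_measurable_if_sets_eq_lebesgue[OF _ borel_measurable_normalized_monomial]) simp
    show "(\<lambda>n. normalized_monomial k (n + N) z) \<longlonglongrightarrow> 0" if "z \<in> Hk k" for z
      using LIMSEQ_ignore_initial_segment[OF normalized_monomial_tendsto_zero[OF assms(1) that]] .
  qed (use c in auto)
qed

end
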